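(* Let $X=\{X_i:1\le i\le n\}$ be a Gaussian random field (jointly normal) with $\mathbb{E}[X_i]=\mu_i$, $\mathrm{Var}(X_i)=\sigma_i^2>0$, and $\mathrm{Cor}(X_i,X_j)<1$ for all $1\le i\neq j\le n$. Then for each $1\le k\le n$ the law of the $k$-th order statistic $X_{(k)}$ is absolutely continuous with respect to Lebesgue measure on $\mathbb{R}$, with density (for a.e. $z$) $$f_{k,n}(z)=\sum_{i=1}^n\sum_{\substack{J\subseteq[n]\setminus\{i\}\\|J|=n-k}}\sigma_i^{-1}\phi\Big(\frac{z-\mu_i}{\sigma_i}\Big)\,\mathbb{P}\Big\{X_j>z\ \forall j\in J,\ X_\ell\le z\ \forall\ell\in[n]\setminus(\{i\}\cup J)\ \Big|\ X_i=z\Big\},$$ where $\phi$ is the standard normal density, $[n]=\{1,\dots,n\}$, and the conditional probability is the Gaussian regression version (i.e. computed via $X_j=\mu_j+\frac{\mathrm{Cov}(X_j,X_i)}{\sigma_i^2}(X_i-\mu_i)+W_{j\setminus i}$ with the residuals $W_{j\setminus i}$ independent of $X_i$). *)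

theory Defs
  imports "HOL-Probability.Probability"
begin

definition gaussian_rv :: "'a measure \<Rightarrow> ('a \<Rightarrow> real) \<Rightarrow> bool" where
  "gaussian_rv M Y \<longleftrightarrow> Y \<in> borel_measurable M \<and>
     (\<exists>m s. (s > 0 \<and> distributed M lborel Y (\<lambda>x. ennreal (normal_density m s x)))
            \<or> (AE \<omega> in M. Y \<omega> = m))"

definition jointly_gaussian :: "'a measure \<Rightarrow> nat set \<Rightarrow> (nat \<Rightarrow> 'a \<Rightarrow> real) \<Rightarrow> bool" where
  "jointly_gaussian M I X \<longleftrightarrow> (\<forall>i\<in>I. X i \<in> borel_measurable M) \<and>
     (\<forall>c :: nat \<Rightarrow> real. gaussian_rv M (\<lambda>\<omega>. \<Sum>i\<in>I. c i * X i \<omega>))"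

definition covariance :: "'a measure \<Rightarrow> ('a \<Rightarrow> real) \<Rightarrow> ('a \<Rightarrow> real) \<Rightarrow> real" where
  "covariance M Y Z = integral\<^sup>L M (\<lambda>\<omega>. (Y \<omega> - integral\<^sup>L M Y) * (Z \<omega> - integral\<^sup>L M Z))"

definition correlation :: "'a measure \<Rightarrow> ('a \<Rightarrow> real) \<Rightarrow> ('a \<Rightarrow> real) \<Rightarrow> real" where
  "correlation M Y Z = covariance M Y Z / sqrt (covariance M Y Y * covariance M Z Z)"

text \<open>k-th order statistic (k-th smallest, 1-based) of x 1, ..., x n.\<close>
definition order_stat :: "nat \<Rightarrow> nat \<Rightarrow> (nat \<Rightarrow> real) \<Rightarrow> real" where
  "order_stat n k x = sort (map x [1..<Suc n]) ! (k - 1)"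

definition regr_resid :: "'a measure \<Rightarrow> (nat \<Rightarrow> 'a \<Rightarrow> real) \<Rightarrow> nat \<Rightarrow> nat \<Rightarrow> 'a \<Rightarrow> real" where
  "regr_resid M X j i \<omega> = X j \<omega> - integral\<^sup>L M (X j)
     - covariance M (X j) (X i) / covariance M (X i) (X i) * (X i \<omega> - integral\<^sup>L M (X i))"

definition cond_prob_regr :: "'a measure \<Rightarrow> (nat \<Rightarrow> 'a \<Rightarrow> real) \<Rightarrow> nat \<Rightarrow> nat \<Rightarrow> nat set \<Rightarrow> real \<Rightarrow> real" where
  "cond_prob_regr M X n i J z =
     (let Xc = (\<lambda>j \<omega>. integral\<^sup>L M (X j)
                + covariance M (X j) (X i) / covariance M (X i) (X i) * (z - integral\<^sup>L M (X i))
                + regr_resid M X j i \<omega>)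
      in measure M {\<omega> \<in> space M. (\<forall>j\<in>J. Xc j \<omega> > z) \<and>
                                  (\<forall>l\<in>{1..n} - ({i} \<union> J). Xc l \<omega> \<le> z)})"

end

theory Submission
  imports Defs
begin

text \<open>
  Ties occur with probability zero: \<open>Cor(X\<^sub>i, X\<^sub>j) < 1\<close> makes every difference
  \<open>X\<^sub>i - X\<^sub>j\<close> a nondegenerate Gaussian. So almost surely the \<open>k\<close>-th order statistic equals
  \<open>X\<^sub>i\<close> for exactly one \<open>i\<close>, namely the one whose set \<open>J\<close> of indices with \<open>X\<^sub>j > X\<^sub>i\<close> has
  \<open>n - k\<close> elements, and its law is the sum over \<open>i\<close> and \<open>J\<close> of the laws of \<open>X\<^sub>i\<close> restricted
  to these rank events.

  Writing \<open>X\<^sub>j = \<mu>\<^sub>j + Cov(X\<^sub>j, X\<^sub>i) / \<sigma>\<^sub>i\<^sup>2 (X\<^sub>i - \<mu>\<^sub>i) + W\<^sub>j\<close>, the residuals \<open>W\<^sub>j\<close> are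
  uncorrelated with \<open>X\<^sub>i\<close>, so by joint Gaussianity the characteristic function of
  \<open>(X\<^sub>i, W)\<close> factorises and \<open>(X\<^sub>i, W)\<close> has the law of \<open>X\<^sub>i\<close> and \<open>W\<close> taken from two independent
  copies of the probability space. Fubini then integrates the conditional probability, computed
  with \<open>X\<^sub>i\<close> frozen at \<open>z\<close>, against the normal density of \<open>X\<^sub>i\<close>.

  That characteristic functions determine joint laws is derived from Levy's one-dimensional
  uniqueness theorem by induction on the number of coordinates, applied to laws weighted by
  nonnegative functions.
\<close>

section \<open>Characteristic functions determine joint laws\<close>

lemma integrable_weight_mult_bounded:
  fixes K :: "'a \<Rightarrow> real" and g :: "'a \<Rightarrow> 'b::{real_normed_field, banach, second_countable_topology}"
  assumes "integrable M K" "g \<in> borel_measurable M" "\<And>\<omega>. \<omega> \<in> space M \<Longrightarrow> norm (g \<omega>) \<le> 1"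
  shows "integrable M (\<lambda>\<omega>. of_real (K \<omega>) * g \<omega>)"
proof (rule Bochner_Integration.integrable_bound[OF assms(1)])
  show "(\<lambda>\<omega>. of_real (K \<omega>) * g \<omega>) \<in> borel_measurable M"
    using assms(1,2) by measurable
  show "AE \<omega> in M. norm (of_real (K \<omega>) * g \<omega>) \<le> norm (K \<omega>)"
    using assms(3) by (intro AE_I2) (auto simp: norm_mult intro: mult_left_le)
qed

lemma weighted_law:
  fixes U K :: "'a \<Rightarrow> real"
  assumes [measurable]: "U \<in> borel_measurable M" "K \<in> borel_measurable M"
    and K: "\<And>\<omega>. \<omega> \<in> space M \<Longrightarrow> 0 \<le> K \<omega>" "integrable M K"
    and c: "integral\<^sup>L M K = c" "0 < c"
  defines "D \<equiv> distr (density M (\<lambda>\<omega>. K \<omega> / c)) borel U"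
  shows "real_distribution D"
    and "char D s = (CLINT \<omega>|M. of_real (K \<omega>) * iexp (s * U \<omega>)) / c"
    and "B \<in> sets borel \<Longrightarrow> measure D B = (LINT \<omega>|M. K \<omega> * indicator B (U \<omega>)) / c"
proof -
  have "emeasure (density M (\<lambda>\<omega>. K \<omega> / c)) (space M) = (\<integral>\<^sup>+\<omega>. ennreal (K \<omega> / c) \<partial>M)"
    by (simp add: emeasure_density)
  also have "\<dots> = ennreal (LINT \<omega>|M. K \<omega> / c)"
    using K c by (intro nn_integral_eq_integral) auto
  also have "(LINT \<omega>|M. K \<omega> / c) = 1"
    using c by simp
  finally have "prob_space (density M (\<lambda>\<omega>. K \<omega> / c))"
    by (intro prob_spaceI) simp
  then show D: "real_distribution D"
    unfolding D_def real_distribution_def real_distribution_axioms_def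
    by (auto intro: prob_space.prob_space_distr)
  have "char D s = (CLINT \<omega>|M. (K \<omega> / c) *\<^sub>R iexp (s * U \<omega>))"
    unfolding char_def D_def using K c by (simp add: integral_distr integral_density)
  also have "\<dots> = (CLINT \<omega>|M. of_real (K \<omega>) * iexp (s * U \<omega>) / c)"
    by (simp add: scaleR_conv_of_real)
  finally show "char D s = (CLINT \<omega>|M. of_real (K \<omega>) * iexp (s * U \<omega>)) / c"
    by simp
  assume [measurable]: "B \<in> sets borel"
  have "measure D B = (LINT x|D. indicator B x)"
  proof -
    interpret real_distribution D by (fact D)
    show ?thesis using \<open>B \<in> sets borel\<close> by simp
  qed
  also have "\<dots> = (LINT \<omega>|density M (\<lambda>\<omega>. K \<omega> / c). indicator B (U \<omega>))"
    unfolding D_def by (rule integral_distr) auto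
  also have "\<dots> = (LINT \<omega>|M. (K \<omega> / c) * indicator B (U \<omega>))"
    using K c by (subst integral_density) auto
  finally show "measure D B = (LINT \<omega>|M. K \<omega> * indicator B (U \<omega>)) / c"
    by simp
qed

lemma weighted_indicator_integral_eq_if_char_eq:
  fixes U K :: "'a \<Rightarrow> real" and V K' :: "'b \<Rightarrow> real"
  assumes [measurable]: "U \<in> borel_measurable M" "K \<in> borel_measurable M"
    "V \<in> borel_measurable N" "K' \<in> borel_measurable N"
    and K: "\<And>\<omega>. \<omega> \<in> space M \<Longrightarrow> 0 \<le> K \<omega>" "integrable M K"
    and K': "\<And>\<omega>. \<omega> \<in> space N \<Longrightarrow> 0 \<le> K' \<omega>" "integrable N K'"
    and char_eq: "\<And>s. (CLINT \<omega>|M. of_real (K \<omega>) * iexp (s * U \<omega>))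
                      = (CLINT \<omega>|N. of_real (K' \<omega>) * iexp (s * V \<omega>))"
    and [measurable]: "B \<in> sets borel"
  shows "(LINT \<omega>|M. K \<omega> * indicator B (U \<omega>)) = (LINT \<omega>|N. K' \<omega> * indicator B (V \<omega>))"
proof -
  define c where "c = integral\<^sup>L M K"
  have c': "integral\<^sup>L N K' = c"
    using char_eq[of 0] by (simp add: c_def)
  have "0 \<le> c"
    using K by (auto simp: c_def intro!: integral_nonneg_AE)
  then consider "c = 0" | "0 < c"
    by linarith
  then show ?thesis
  proof cases
    case 1
    have "AE \<omega> in M. K \<omega> = 0"
      using K 1 by (subst integral_nonneg_eq_0_iff_AE[symmetric]) (auto simp: c_def)
    moreover have "AE \<omega> in N. K' \<omega> = 0"
      using K' c' 1 by (subst integral_nonneg_eq_0_iff_AE[symmetric]) auto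
    ultimately have "(LINT \<omega>|M. K \<omega> * indicator B (U \<omega>)) = 0" "(LINT \<omega>|N. K' \<omega> * indicator B (V \<omega>)) = 0"
      by (auto intro!: integral_eq_zero_AE elim!: eventually_mono)
    then show ?thesis
      by simp
  next
    case 2
    let ?DM = "distr (density M (\<lambda>\<omega>. K \<omega> / c)) borel U"
    let ?DN = "distr (density N (\<lambda>\<omega>. K' \<omega> / c)) borel V"
    note DM = weighted_law[of U M K c, OF _ _ K c_def[symmetric] 2]
    note DN = weighted_law[of V N K' c, OF _ _ K' c' 2]
    have "?DM = ?DN"
      using DM(1,2) DN(1,2) char_eq by (intro Levy_uniqueness) auto
    then have "measure ?DM B = measure ?DN B"
      by simp
    then show ?thesis
      using DM(3) DN(3) 2 by simp
  qed
qed

lemma integral_weighted_iexp_combination: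
  fixes H U \<theta> :: "'a \<Rightarrow> real"
  assumes [measurable]: "H \<in> borel_measurable M" "U \<in> borel_measurable M" "\<theta> \<in> borel_measurable M"
    and H: "integrable M H"
  shows "(CLINT \<omega>|M. of_real (H \<omega>) * (1 + a * iexp (\<theta> \<omega>) + b * iexp (- \<theta> \<omega>)) * iexp (s * U \<omega>))
       = (CLINT \<omega>|M. of_real (H \<omega>) * iexp (s * U \<omega>))
         + a * (CLINT \<omega>|M. of_real (H \<omega>) * iexp (s * U \<omega> + \<theta> \<omega>))
         + b * (CLINT \<omega>|M. of_real (H \<omega>) * iexp (s * U \<omega> - \<theta> \<omega>))"
proof -
  have int: "integrable M (\<lambda>\<omega>. of_real (H \<omega>) * iexp (f \<omega>))" if [measurable]: "f \<in> borel_measurable M" for f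
    using H by (rule integrable_weight_mult_bounded) auto
  have "of_real (H \<omega>) * (1 + a * iexp (\<theta> \<omega>) + b * iexp (- \<theta> \<omega>)) * iexp (s * U \<omega>)
      = of_real (H \<omega>) * iexp (s * U \<omega>) + a * (of_real (H \<omega>) * iexp (s * U \<omega> + \<theta> \<omega>))
        + b * (of_real (H \<omega>) * iexp (s * U \<omega> - \<theta> \<omega>))" for \<omega>
    by (simp add: distrib_left right_diff_distrib exp_add exp_diff exp_minus field_simps)
  moreover have "integrable M (\<lambda>\<omega>. of_real (H \<omega>) * iexp (s * U \<omega>))"
    "integrable M (\<lambda>\<omega>. of_real (H \<omega>) * iexp (s * U \<omega> + \<theta> \<omega>))"
    "integrable M (\<lambda>\<omega>. of_real (H \<omega>) * iexp (s * U \<omega> - \<theta> \<omega>))"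
    by (rule int; measurable)+
  ultimately show ?thesis
    by (simp del: of_real_mult)
qed

lemma complex_integral_of_real_mult_iexp:
  fixes F \<theta> :: "'a \<Rightarrow> real"
  assumes "integrable M F" and [measurable]: "\<theta> \<in> borel_measurable M"
  shows "(CLINT \<omega>|M. of_real (F \<omega>) * iexp (\<theta> \<omega>))
       = of_real (LINT \<omega>|M. F \<omega> * cos (\<theta> \<omega>)) + \<i> * of_real (LINT \<omega>|M. F \<omega> * sin (\<theta> \<omega>))"
proof -
  have "of_real (F \<omega>) * iexp (\<theta> \<omega>) = of_real (F \<omega> * cos (\<theta> \<omega>)) + \<i> * of_real (F \<omega> * sin (\<theta> \<omega>))" for \<omega>
    by (simp add: exp_Euler cos_of_real sin_of_real algebra_simps)
  moreover have "integrable M (\<lambda>\<omega>. F \<omega> * cos (\<theta> \<omega>))" "integrable M (\<lambda>\<omega>. F \<omega> * sin (\<theta> \<omega>))"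
    using integrable_weight_mult_bounded[OF assms(1), of "\<lambda>\<omega>. cos (\<theta> \<omega>)"]
      integrable_weight_mult_bounded[OF assms(1), of "\<lambda>\<omega>. sin (\<theta> \<omega>)"] by simp_all
  ultimately show ?thesis
    by (simp del: of_real_mult)
qed

context
  fixes M :: "'a measure" and N :: "'b measure"
    and U \<theta> H :: "'a \<Rightarrow> real" and V \<theta>' H' :: "'b \<Rightarrow> real"
  assumes meas [measurable]: "U \<in> borel_measurable M" "\<theta> \<in> borel_measurable M" "H \<in> borel_measurable M"
    "V \<in> borel_measurable N" "\<theta>' \<in> borel_measurable N" "H' \<in> borel_measurable N"
    and H: "\<And>\<omega>. \<omega> \<in> space M \<Longrightarrow> 0 \<le> H \<omega>" "integrable M H"
    and H': "\<And>\<omega>. \<omega> \<in> space N \<Longrightarrow> 0 \<le> H' \<omega>" "integrable N H'"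
    and char_eq: "\<And>s r. (CLINT \<omega>|M. of_real (H \<omega>) * iexp (s * U \<omega> + r * \<theta> \<omega>))
                        = (CLINT \<omega>|N. of_real (H' \<omega>) * iexp (s * V \<omega> + r * \<theta>' \<omega>))"
begin

lemma weighted_char_eq_trig_weight:
  assumes g: "\<And>x. of_real (1 + g x) = 1 + a * iexp x + b * iexp (- x)"
  shows "(CLINT \<omega>|M. of_real (H \<omega> * (1 + g (\<theta> \<omega>))) * iexp (s * U \<omega>))
       = (CLINT \<omega>|N. of_real (H' \<omega> * (1 + g (\<theta>' \<omega>))) * iexp (s * V \<omega>))"
proof -
  have weight: "\<And>\<omega>. of_real (H \<omega> * (1 + g (\<theta> \<omega>))) = of_real (H \<omega>) * (1 + a * iexp (\<theta> \<omega>) + b * iexp (- \<theta> \<omega>))"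
    "\<And>\<omega>. of_real (H' \<omega> * (1 + g (\<theta>' \<omega>))) = of_real (H' \<omega>) * (1 + a * iexp (\<theta>' \<omega>) + b * iexp (- \<theta>' \<omega>))"
    by (simp_all only: of_real_mult g)
  have "(CLINT \<omega>|M. of_real (H \<omega>) * iexp (s * U \<omega>)) = (CLINT \<omega>|N. of_real (H' \<omega>) * iexp (s * V \<omega>))"
    "(CLINT \<omega>|M. of_real (H \<omega>) * iexp (s * U \<omega> + \<theta> \<omega>))
      = (CLINT \<omega>|N. of_real (H' \<omega>) * iexp (s * V \<omega> + \<theta>' \<omega>))"
    "(CLINT \<omega>|M. of_real (H \<omega>) * iexp (s * U \<omega> - \<theta> \<omega>))
      = (CLINT \<omega>|N. of_real (H' \<omega>) * iexp (s * V \<omega> - \<theta>' \<omega>))"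
    using char_eq[of s 0] char_eq[of s 1] char_eq[of s "-1"]
    by (simp_all only: mult_zero_left add_0_right mult_1_left mult_minus1 add_uminus_conv_diff)
  then show ?thesis
    unfolding weight integral_weighted_iexp_combination[OF meas(3,1,2) H(2)]
      integral_weighted_iexp_combination[OF meas(6,4,5) H'(2)]
    by (simp only:)
qed

text \<open>\<open>1 + cos\<close> and \<open>1 + sin\<close> are nonnegative and linear combinations of \<open>1\<close> and \<open>iexp (\<plusminus>x)\<close>,
  so the one-dimensional case applies to the weights \<open>H (1 + cos \<theta>)\<close> and \<open>H (1 + sin \<theta>)\<close>.\<close>

lemma weighted_trig_integral_eq:
  assumes g: "\<And>x. of_real (1 + g x) = 1 + a * iexp x + b * iexp (- x)"
    and g_bound: "\<And>x. \<bar>g x\<bar> \<le> 1" and [measurable]: "g \<in> borel_measurable borel" "B \<in> sets borel"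
  shows "(LINT \<omega>|M. H \<omega> * indicator B (U \<omega>) * g (\<theta> \<omega>)) = (LINT \<omega>|N. H' \<omega> * indicator B (V \<omega>) * g (\<theta>' \<omega>))"
proof -
  have int_M: "integrable M (\<lambda>\<omega>. H \<omega> * f \<omega>)" if [measurable]: "f \<in> borel_measurable M" "\<And>\<omega>. \<bar>f \<omega>\<bar> \<le> 1" for f
    using integrable_weight_mult_bounded[OF H(2), of f] that by simp
  have int_N: "integrable N (\<lambda>\<omega>. H' \<omega> * f \<omega>)" if [measurable]: "f \<in> borel_measurable N" "\<And>\<omega>. \<bar>f \<omega>\<bar> \<le> 1" for f
    using integrable_weight_mult_bounded[OF H'(2), of f] that by simp
  have "(LINT \<omega>|M. H \<omega> * indicator B (U \<omega>)) = (LINT \<omega>|N. H' \<omega> * indicator B (V \<omega>))"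
    using char_eq[of _ 0] by (intro weighted_indicator_integral_eq_if_char_eq[OF _ _ _ _ H H']) auto
  moreover have "(LINT \<omega>|M. H \<omega> * (1 + g (\<theta> \<omega>)) * indicator B (U \<omega>))
      = (LINT \<omega>|N. H' \<omega> * (1 + g (\<theta>' \<omega>)) * indicator B (V \<omega>))"
  proof (rule weighted_indicator_integral_eq_if_char_eq)
    show "integrable M (\<lambda>\<omega>. H \<omega> * (1 + g (\<theta> \<omega>)))" "integrable N (\<lambda>\<omega>. H' \<omega> * (1 + g (\<theta>' \<omega>)))"
      using H(2) H'(2) int_M[of "\<lambda>\<omega>. g (\<theta> \<omega>)"] int_N[of "\<lambda>\<omega>. g (\<theta>' \<omega>)"] g_bound
      by (simp_all add: distrib_left)
    have g_nonneg: "0 \<le> 1 + g x" for x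
      using g_bound[of x] by linarith
    show "0 \<le> H \<omega> * (1 + g (\<theta> \<omega>))" if "\<omega> \<in> space M" for \<omega>
      using H(1)[OF that] g_nonneg by simp
    show "0 \<le> H' \<omega> * (1 + g (\<theta>' \<omega>))" if "\<omega> \<in> space N" for \<omega>
      using H'(1)[OF that] g_nonneg by simp
  qed (use weighted_char_eq_trig_weight[OF g] in auto)
  moreover have "(LINT \<omega>|M. H \<omega> * (1 + g (\<theta> \<omega>)) * indicator B (U \<omega>))
      = (LINT \<omega>|M. H \<omega> * indicator B (U \<omega>)) + (LINT \<omega>|M. H \<omega> * indicator B (U \<omega>) * g (\<theta> \<omega>))"
    using int_M[of "\<lambda>\<omega>. indicator B (U \<omega>)"] int_M[of "\<lambda>\<omega>. indicator B (U \<omega>) * g (\<theta> \<omega>)"] g_bound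
    by (simp add: algebra_simps abs_mult indicator_def)
  moreover have "(LINT \<omega>|N. H' \<omega> * (1 + g (\<theta>' \<omega>)) * indicator B (V \<omega>))
      = (LINT \<omega>|N. H' \<omega> * indicator B (V \<omega>)) + (LINT \<omega>|N. H' \<omega> * indicator B (V \<omega>) * g (\<theta>' \<omega>))"
    using int_N[of "\<lambda>\<omega>. indicator B (V \<omega>)"] int_N[of "\<lambda>\<omega>. indicator B (V \<omega>) * g (\<theta>' \<omega>)"] g_bound
    by (simp add: algebra_simps abs_mult indicator_def)
  ultimately show ?thesis
    by simp
qed

lemma weighted_iexp_integral_eq_if_joint_char_eq:
  assumes [measurable]: "B \<in> sets borel"
  shows "(CLINT \<omega>|M. of_real (H \<omega> * indicator B (U \<omega>)) * iexp (\<theta> \<omega>))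
       = (CLINT \<omega>|N. of_real (H' \<omega> * indicator B (V \<omega>)) * iexp (\<theta>' \<omega>))"
proof -
  have "of_real (1 + cos x) = 1 + 1/2 * iexp x + 1/2 * iexp (- x)" for x
    by (simp add: cos_exp_eq cos_of_real[symmetric] field_simps)
  then have cos_eq: "(LINT \<omega>|M. H \<omega> * indicator B (U \<omega>) * cos (\<theta> \<omega>))
      = (LINT \<omega>|N. H' \<omega> * indicator B (V \<omega>) * cos (\<theta>' \<omega>))"
    by (intro weighted_trig_integral_eq[where a="1/2" and b="1/2"]) auto
  have "of_real (1 + sin x) = 1 + (- \<i> / 2) * iexp x + (\<i> / 2) * iexp (- x)" for x
    by (simp add: sin_exp_eq sin_of_real[symmetric] field_simps)
  then have sin_eq: "(LINT \<omega>|M. H \<omega> * indicator B (U \<omega>) * sin (\<theta> \<omega>))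
      = (LINT \<omega>|N. H' \<omega> * indicator B (V \<omega>) * sin (\<theta>' \<omega>))"
    by (intro weighted_trig_integral_eq[where a="- \<i> / 2" and b="\<i> / 2"]) auto
  have "integrable M (\<lambda>\<omega>. H \<omega> * indicator B (U \<omega>))" "integrable N (\<lambda>\<omega>. H' \<omega> * indicator B (V \<omega>))"
    using integrable_weight_mult_bounded[OF H(2), of "\<lambda>\<omega>. indicator B (U \<omega>) :: real"]
      integrable_weight_mult_bounded[OF H'(2), of "\<lambda>\<omega>. indicator B (V \<omega>) :: real"] by simp_all
  then show ?thesis
    using cos_eq sin_eq by (simp only: complex_integral_of_real_mult_iexp meas)
qed

end

lemma weighted_box_integral_eq_if_joint_char_eq:
  fixes Y :: "'i \<Rightarrow> 'a \<Rightarrow> real" and Y' :: "'i \<Rightarrow> 'b \<Rightarrow> real"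
    and H :: "'a \<Rightarrow> real" and H' :: "'b \<Rightarrow> real"
  assumes "finite I"
    and "\<And>j. j \<in> I \<Longrightarrow> Y j \<in> borel_measurable M" "\<And>j. j \<in> I \<Longrightarrow> Y' j \<in> borel_measurable N"
    and "H \<in> borel_measurable M" "\<And>\<omega>. \<omega> \<in> space M \<Longrightarrow> 0 \<le> H \<omega>" "integrable M H"
    and "H' \<in> borel_measurable N" "\<And>\<omega>. \<omega> \<in> space N \<Longrightarrow> 0 \<le> H' \<omega>" "integrable N H'"
    and "\<And>t. (CLINT \<omega>|M. of_real (H \<omega>) * iexp (\<Sum>j\<in>I. t j * Y j \<omega>))
             = (CLINT \<omega>|N. of_real (H' \<omega>) * iexp (\<Sum>j\<in>I. t j * Y' j \<omega>))"
    and "\<And>j. j \<in> I \<Longrightarrow> B j \<in> sets borel"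
  shows "(LINT \<omega>|M. H \<omega> * (\<Prod>j\<in>I. indicator (B j) (Y j \<omega>)))
       = (LINT \<omega>|N. H' \<omega> * (\<Prod>j\<in>I. indicator (B j) (Y' j \<omega>)))"
  using assms
proof (induction I arbitrary: H H' rule: finite_induct)
  case empty
  then show ?case
    by simp
next
  case (insert j I)
  have [measurable]: "Y j \<in> borel_measurable M" "Y' j \<in> borel_measurable N"
    "H \<in> borel_measurable M" "H' \<in> borel_measurable N" "B j \<in> sets borel"
    using insert.prems by auto
  have [measurable]: "(\<lambda>\<omega>. \<Sum>k\<in>I. t k * Y k \<omega>) \<in> borel_measurable M"
    "(\<lambda>\<omega>. \<Sum>k\<in>I. t k * Y' k \<omega>) \<in> borel_measurable N" for t
    using insert.prems by (auto intro!: borel_measurable_sum borel_measurable_times)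
  have split_sum: "(\<Sum>k\<in>insert j I. ((\<lambda>k. r * t k)(j := s)) k * Z k) = s * Z j + r * (\<Sum>k\<in>I. t k * Z k)"
    for s r t and Z :: "'i \<Rightarrow> real"
    using insert.hyps by (auto simp: sum_distrib_left mult.assoc intro!: sum.cong)
  have "(CLINT \<omega>|M. of_real (H \<omega> * indicator (B j) (Y j \<omega>)) * iexp (\<Sum>k\<in>I. t k * Y k \<omega>))
      = (CLINT \<omega>|N. of_real (H' \<omega> * indicator (B j) (Y' j \<omega>)) * iexp (\<Sum>k\<in>I. t k * Y' k \<omega>))" for t
  proof (rule weighted_iexp_integral_eq_if_joint_char_eq)
    show "(CLINT \<omega>|M. of_real (H \<omega>) * iexp (s * Y j \<omega> + r * (\<Sum>k\<in>I. t k * Y k \<omega>)))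
        = (CLINT \<omega>|N. of_real (H' \<omega>) * iexp (s * Y' j \<omega> + r * (\<Sum>k\<in>I. t k * Y' k \<omega>)))" for s r
      using insert.prems(9)[of "(\<lambda>k. r * t k)(j := s)"] by (simp only: split_sum)
  qed (use insert.prems in auto)
  then have "(LINT \<omega>|M. (H \<omega> * indicator (B j) (Y j \<omega>)) * (\<Prod>k\<in>I. indicator (B k) (Y k \<omega>)))
      = (LINT \<omega>|N. (H' \<omega> * indicator (B j) (Y' j \<omega>)) * (\<Prod>k\<in>I. indicator (B k) (Y' k \<omega>)))"
  proof (intro insert.IH)
    show "integrable M (\<lambda>\<omega>. H \<omega> * indicator (B j) (Y j \<omega>))"
      using integrable_weight_mult_bounded[of M H "\<lambda>\<omega>. indicator (B j) (Y j \<omega>) :: real"] insert.prems by simp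
    show "integrable N (\<lambda>\<omega>. H' \<omega> * indicator (B j) (Y' j \<omega>))"
      using integrable_weight_mult_bounded[of N H' "\<lambda>\<omega>. indicator (B j) (Y' j \<omega>) :: real"] insert.prems by simp
  qed (use insert.prems in auto)
  then show ?case
    using insert.hyps by (simp add: mult.assoc)
qed

lemma prod_indicator_eq_of_bool:
  "finite I \<Longrightarrow> (\<Prod>j\<in>I. indicator (A j) (x j) :: real) = of_bool (\<forall>j\<in>I. x j \<in> A j)"
  by (induction I rule: finite_induct) auto

lemma emeasure_distr_PiM_box:
  fixes Y :: "'i \<Rightarrow> 'a \<Rightarrow> real"
  assumes "prob_space M" "finite I" "\<And>j. j \<in> I \<Longrightarrow> Y j \<in> borel_measurable M"
    and "\<And>j. j \<in> I \<Longrightarrow> A j \<in> sets borel"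
  shows "emeasure (distr M (PiM I (\<lambda>_. borel)) (\<lambda>\<omega>. \<lambda>j\<in>I. Y j \<omega>)) (Pi\<^sub>E I A)
       = ennreal (LINT \<omega>|M. (\<Prod>j\<in>I. indicator (A j) (Y j \<omega>)))"
proof -
  interpret prob_space M by fact
  let ?S = "(\<lambda>\<omega>. \<lambda>j\<in>I. Y j \<omega>) -` Pi\<^sub>E I A \<inter> space M"
  have meas: "(\<lambda>\<omega>. \<lambda>j\<in>I. Y j \<omega>) \<in> measurable M (PiM I (\<lambda>_. borel))"
    using assms(3) by (intro measurable_restrict) auto
  have S: "?S \<in> sets M"
    using assms(2,4) by (intro measurable_sets[OF meas] sets_PiM_I_finite) auto
  have "(\<Prod>j\<in>I. indicator (A j) (Y j \<omega>)) = (indicator ?S \<omega> :: real)" if "\<omega> \<in> space M" for \<omega>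
    using assms(2) that by (auto simp: prod_indicator_eq_of_bool indicator_def PiE_def Pi_def)
  then have "(LINT \<omega>|M. (\<Prod>j\<in>I. indicator (A j) (Y j \<omega>))) = measure M ?S"
    using S by (simp add: Bochner_Integration.integral_cong)
  then show ?thesis
    using meas S assms(2,4) by (simp add: emeasure_distr emeasure_eq_measure sets_PiM_I_finite)
qed

theorem distr_PiM_eq_if_joint_char_eq:
  fixes Y :: "'i \<Rightarrow> 'a \<Rightarrow> real" and Y' :: "'i \<Rightarrow> 'b \<Rightarrow> real"
  assumes M: "prob_space M" and N: "prob_space N" and I: "finite I"
    and Y: "\<And>j. j \<in> I \<Longrightarrow> Y j \<in> borel_measurable M" and Y': "\<And>j. j \<in> I \<Longrightarrow> Y' j \<in> borel_measurable N"
    and char_eq: "\<And>t. (CLINT \<omega>|M. iexp (\<Sum>j\<in>I. t j * Y j \<omega>)) = (CLINT \<omega>|N. iexp (\<Sum>j\<in>I. t j * Y' j \<omega>))"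
  shows "distr M (PiM I (\<lambda>_. borel)) (\<lambda>\<omega>. \<lambda>j\<in>I. Y j \<omega>) = distr N (PiM I (\<lambda>_. borel)) (\<lambda>\<omega>. \<lambda>j\<in>I. Y' j \<omega>)"
proof (rule measure_eqI_PiM_finite[OF I, where A="\<lambda>_. space (PiM I (\<lambda>_. borel))"])
  fix A :: "'i \<Rightarrow> real set" assume A: "\<And>j. j \<in> I \<Longrightarrow> A j \<in> sets borel"
  interpret M: prob_space M by fact
  interpret N: prob_space N by fact
  have "(LINT \<omega>|M. 1 * (\<Prod>j\<in>I. indicator (A j) (Y j \<omega>)) :: real)
      = (LINT \<omega>|N. 1 * (\<Prod>j\<in>I. indicator (A j) (Y' j \<omega>)))"
    using A Y Y' char_eq
    by (intro weighted_box_integral_eq_if_joint_char_eq[OF I, where H="\<lambda>_. 1" and H'="\<lambda>_. 1"]) auto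
  then show "emeasure (distr M (PiM I (\<lambda>_. borel)) (\<lambda>\<omega>. \<lambda>j\<in>I. Y j \<omega>)) (Pi\<^sub>E I A)
      = emeasure (distr N (PiM I (\<lambda>_. borel)) (\<lambda>\<omega>. \<lambda>j\<in>I. Y' j \<omega>)) (Pi\<^sub>E I A)"
    using M N I A Y Y' by (simp add: emeasure_distr_PiM_box)
next
  show "range (\<lambda>_. space (PiM I (\<lambda>_. borel))) \<subseteq> prod_algebra I (\<lambda>_. borel)"
    using prod_algebraI_finite[OF I, of "\<lambda>_. UNIV" "\<lambda>_. borel"] by (auto simp: space_PiM)
  have "prob_space (distr M (PiM I (\<lambda>_. borel)) (\<lambda>\<omega>. \<lambda>j\<in>I. Y j \<omega>))"
    using M Y by (intro prob_space.prob_space_distr measurable_restrict) auto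
  then show "emeasure (distr M (PiM I (\<lambda>_. borel)) (\<lambda>\<omega>. \<lambda>j\<in>I. Y j \<omega>)) (space (PiM I (\<lambda>_. borel))) \<noteq> \<infinity>"
    using prob_space.emeasure_space_1 by fastforce
qed auto

lemma integral_pair_measure_mult:
  fixes f :: "'a \<Rightarrow> complex" and g :: "'b \<Rightarrow> complex"
  assumes "prob_space M" "prob_space N"
    and [measurable]: "f \<in> borel_measurable M" "g \<in> borel_measurable N"
    and "\<And>x. x \<in> space M \<Longrightarrow> norm (f x) \<le> 1" "\<And>y. y \<in> space N \<Longrightarrow> norm (g y) \<le> 1"
  shows "(CLINT p|M \<Otimes>\<^sub>M N. f (fst p) * g (snd p)) = integral\<^sup>L M f * integral\<^sup>L N g"
proof -
  interpret pair_prob_space M N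
    using assms(1,2) by (simp add: pair_prob_space_def pair_sigma_finite_def prob_space_imp_sigma_finite)
  have "integrable (M \<Otimes>\<^sub>M N) (\<lambda>p. f (fst p) * g (snd p))"
    using assms(5,6) by (intro P.integrable_const_bound[where B=1] AE_I2)
      (auto simp: space_pair_measure norm_mult intro: mult_le_one)
  then show ?thesis
    by (simp add: integral_fst'[symmetric])
qed

lemma nn_integral_sum_sum:
  assumes "\<And>i j. i \<in> I \<Longrightarrow> j \<in> J i \<Longrightarrow> f i j \<in> borel_measurable M"
  shows "(\<integral>\<^sup>+x. (\<Sum>i\<in>I. \<Sum>j\<in>J i. f i j x) \<partial>M) = (\<Sum>i\<in>I. \<Sum>j\<in>J i. \<integral>\<^sup>+x. f i j x \<partial>M)"
proof -
  have "(\<integral>\<^sup>+x. (\<Sum>i\<in>I. \<Sum>j\<in>J i. f i j x) \<partial>M) = (\<Sum>i\<in>I. \<integral>\<^sup>+x. (\<Sum>j\<in>J i. f i j x) \<partial>M)"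
    using assms by (intro nn_integral_sum borel_measurable_sum) auto
  also have "\<dots> = (\<Sum>i\<in>I. \<Sum>j\<in>J i. \<integral>\<^sup>+x. f i j x \<partial>M)"
    using assms by (intro sum.cong refl nn_integral_sum) auto
  finally show ?thesis .
qed

section \<open>Gaussian random variables\<close>

context prob_space
begin

lemma variance_eq_covariance: "variance Y = covariance M Y Y"
  by (simp add: covariance_def power2_eq_square)

lemma gaussian_rv_add_const:
  assumes "gaussian_rv M G"
  shows "gaussian_rv M (\<lambda>\<omega>. G \<omega> + d)"
proof -
  from assms obtain m s where G: "G \<in> borel_measurable M"
    and "(0 < s \<and> distributed M lborel G (normal_density m s)) \<or> (AE \<omega> in M. G \<omega> = m)"
    by (auto simp: gaussian_rv_def)
  then consider "0 < s" "distributed M lborel G (normal_density m s)" | "AE \<omega> in M. G \<omega> = m"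
    by blast
  then show ?thesis
  proof cases
    case 1
    then have "distributed M lborel (\<lambda>\<omega>. d + 1 * G \<omega>) (normal_density (d + 1 * m) (\<bar>1\<bar> * s))"
      by (intro normal_density_affine) auto
    then show ?thesis
      using 1 G by (auto simp: gaussian_rv_def add.commute)
  next
    case 2
    then have "AE \<omega> in M. G \<omega> + d = m + d"
      by eventually_elim simp
    then show ?thesis
      using G unfolding gaussian_rv_def by (intro conjI exI[of _ "m + d"] disjI2) auto
  qed
qed

lemma gaussian_rv_square_integrable:
  assumes "gaussian_rv M G"
  shows "integrable M (\<lambda>\<omega>. (G \<omega>)\<^sup>2)"
proof -
  from assms obtain m s where G[measurable]: "G \<in> borel_measurable M"
    and "(0 < s \<and> distributed M lborel G (normal_density m s)) \<or> (AE \<omega> in M. G \<omega> = m)"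
    by (auto simp: gaussian_rv_def)
  then consider "0 < s" "distributed M lborel G (normal_density m s)" | "AE \<omega> in M. G \<omega> = m"
    by blast
  then show ?thesis
  proof cases
    case 1
    have "integrable M G"
      using 1 distributed_integrable[OF 1(2), of "\<lambda>x. x"] integrable_normal_moment_nz_1[of s m] by simp
    moreover have "integrable M (\<lambda>\<omega>. (G \<omega> - m)\<^sup>2)"
      using 1 distributed_integrable[OF 1(2), of "\<lambda>x. (x - m)\<^sup>2"] integrable_normal_moment[of s m 2] by simp
    moreover have "(G \<omega>)\<^sup>2 = (G \<omega> - m)\<^sup>2 + 2 * m * G \<omega> - m\<^sup>2" for \<omega>
      by (simp add: power2_eq_square algebra_simps)
    ultimately show ?thesis
      by simp
  next
    case 2
    then show ?thesis
      by (intro integrable_const_bound[where B="m\<^sup>2"]) (auto elim: eventually_mono)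
  qed
qed

lemma char_gaussian_rv:
  assumes "gaussian_rv M G"
  shows "(CLINT \<omega>|M. iexp (G \<omega>)) = iexp (expectation G) * of_real (exp (- variance G / 2))"
proof -
  from assms obtain m s where G[measurable]: "G \<in> borel_measurable M"
    and "(0 < s \<and> distributed M lborel G (normal_density m s)) \<or> (AE \<omega> in M. G \<omega> = m)"
    by (auto simp: gaussian_rv_def)
  then consider "0 < s" "distributed M lborel G (normal_density m s)" | "AE \<omega> in M. G \<omega> = m"
    by blast
  then show ?thesis
  proof cases
    case 1
    define Z where "Z \<omega> = (G \<omega> - m) / s" for \<omega>
    have [measurable]: "Z \<in> borel_measurable M"
      unfolding Z_def by measurable
    have "distributed M lborel Z std_normal_density"
      using normal_standard_normal_convert[OF 1(1)] 1(2) by (simp add: Z_def[abs_def])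
    then have "distr M lborel Z = std_normal_distribution"
      by (simp add: distributed_def)
    have "iexp (G \<omega>) = iexp m * iexp (s * Z \<omega>)" for \<omega>
      using 1 by (simp add: Z_def exp_add[symmetric] field_simps)
    then have "(CLINT \<omega>|M. iexp (G \<omega>)) = iexp m * (CLINT \<omega>|M. iexp (s * Z \<omega>))"
      by simp
    also have "(CLINT \<omega>|M. iexp (s * Z \<omega>)) = (CLINT x|distr M lborel Z. iexp (s * x))"
      by (simp add: integral_distr)
    also have "\<dots> = char std_normal_distribution s"
      by (simp add: char_def \<open>distr M lborel Z = std_normal_distribution\<close>)
    also have "\<dots> = of_real (exp (- s\<^sup>2 / 2))"
      by (simp add: char_std_normal_distribution)
    finally show ?thesis
      using normal_distributed_expectation[OF 1] normal_distributed_variance[OF 1] by simp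
  next
    case 2
    have "AE \<omega> in M. iexp (G \<omega>) = iexp m" "AE \<omega> in M. (G \<omega> - m)\<^sup>2 = 0"
      using 2 by (auto elim: eventually_mono)
    moreover have "expectation G = m"
      using 2 by (simp add: integral_cong_AE[of G M "\<lambda>_. m"] prob_space)
    ultimately show ?thesis
      by (simp add: integral_cong_AE[where g="\<lambda>_. iexp m"] integral_cong_AE[where g="\<lambda>_. 0"] prob_space)
  qed
qed

lemma gaussian_rv_normal_distributed:
  assumes "gaussian_rv M G" "0 < variance G"
  shows "distributed M lborel G (normal_density (expectation G) (sqrt (variance G)))"
proof -
  from assms(1) obtain m s where G[measurable]: "G \<in> borel_measurable M"
    and "(0 < s \<and> distributed M lborel G (normal_density m s)) \<or> (AE \<omega> in M. G \<omega> = m)"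
    by (auto simp: gaussian_rv_def)
  then consider "0 < s" "distributed M lborel G (normal_density m s)" | "AE \<omega> in M. G \<omega> = m"
    by blast
  then show ?thesis
  proof cases
    case 1
    then show ?thesis
      using normal_distributed_expectation[OF 1] normal_distributed_variance[OF 1] by simp
  next
    case 2
    then have "AE \<omega> in M. (G \<omega> - expectation G)\<^sup>2 = 0"
      by (simp add: integral_cong_AE[of G M "\<lambda>_. m"] prob_space)
    then have "variance G = 0"
      by (simp add: integral_cong_AE[where g="\<lambda>_. 0"])
    then show ?thesis
      using assms(2) by simp
  qed
qed

lemma distributed_AE_neq:
  assumes "distributed M lborel G f"
  shows "AE \<omega> in M. G \<omega> \<noteq> c"
proof -
  have "emeasure M (G -` {c} \<inter> space M) = (\<integral>\<^sup>+x. f x * indicator {c} x \<partial>lborel)"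
    using distributed_emeasure[OF assms] by simp
  also have "\<dots> = 0"
    using AE_lborel_singleton[of c] distributed_borel_measurable[OF assms]
    by (subst nn_integral_0_iff_AE) (auto elim: eventually_mono)
  finally show ?thesis
    using distributed_measurable[OF assms] by (intro AE_I[of _ _ "G -` {c} \<inter> space M"]) auto
qed

end

text \<open>Not a simp rule: \<open>std_normal_density\<close> abbreviates \<open>normal_density 0 1\<close>.\<close>

lemma normal_density_eq_std_normal_density:
  "0 < \<sigma> \<Longrightarrow> normal_density \<mu> \<sigma> z = 1 / \<sigma> * std_normal_density ((z - \<mu>) / \<sigma>)"
  unfolding normal_density_def by (simp add: real_sqrt_mult power_divide field_simps)

section \<open>Order statistics\<close>

definition exceeds_exactly :: "nat \<Rightarrow> nat \<Rightarrow> nat set \<Rightarrow> real \<Rightarrow> (nat \<Rightarrow> real) \<Rightarrow> bool" where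
  "exceeds_exactly n i J z x \<longleftrightarrow> (\<forall>j\<in>J. z < x j) \<and> (\<forall>l\<in>{1..n} - ({i} \<union> J). x l \<le> z)"

lemma exceeds_exactly_cong:
  assumes "J \<subseteq> {1..n} - {i}" "\<And>j. j \<in> {1..n} \<Longrightarrow> j \<noteq> i \<Longrightarrow> x j = y j"
  shows "exceeds_exactly n i J z x \<longleftrightarrow> exceeds_exactly n i J z y"
  using assms by (auto simp: exceeds_exactly_def subset_iff)

lemma exceeds_exactly_iff:
  assumes "J \<subseteq> {1..n} - {i}"
  shows "exceeds_exactly n i J (x i) x \<longleftrightarrow> J = {j\<in>{1..n}. x i < x j}"
proof
  assume "exceeds_exactly n i J (x i) x"
  then have "j \<in> J" if "j \<in> {1..n}" "x i < x j" for j
    using that unfolding exceeds_exactly_def by (cases "j = i") (auto simp: not_le[symmetric])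
  then show "J = {j\<in>{1..n}. x i < x j}"
    using assms \<open>exceeds_exactly n i J (x i) x\<close> unfolding exceeds_exactly_def by auto
qed (auto simp: exceeds_exactly_def)

lemma measurable_exceeds_exactly:
  assumes "J \<subseteq> {1..n}" and [measurable]: "g \<in> borel_measurable N"
    and f: "\<And>j. j \<in> {1..n} \<Longrightarrow> (\<lambda>x. f x j) \<in> borel_measurable N"
  shows "Measurable.pred N (\<lambda>x. exceeds_exactly n i J (g x) (f x))"
proof -
  have "finite J"
    using assms(1) finite_subset by blast
  then have "Measurable.pred N (\<lambda>x. \<forall>j\<in>J. g x < f x j)"
  proof (rule pred_intros_finite)
    fix j assume "j \<in> J"
    then have [measurable]: "(\<lambda>x. f x j) \<in> borel_measurable N"
      using assms(1) f by auto
    show "Measurable.pred N (\<lambda>x. g x < f x j)"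
      by measurable
  qed
  moreover have "Measurable.pred N (\<lambda>x. \<forall>l\<in>{1..n} - ({i} \<union> J). f x l \<le> g x)"
  proof (rule pred_intros_finite)
    fix l assume "l \<in> {1..n} - ({i} \<union> J)"
    then have [measurable]: "(\<lambda>x. f x l) \<in> borel_measurable N"
      using f by auto
    show "Measurable.pred N (\<lambda>x. f x l \<le> g x)"
      by measurable
  qed simp
  ultimately show ?thesis
    unfolding exceeds_exactly_def by measurable
qed

lemma sorted_nth_downward_closed_iff:
  fixes ys :: "'a::linorder list"
  assumes sorted: "sorted ys" and k: "k < length ys" and P: "\<And>x y. P y \<Longrightarrow> x \<le> y \<Longrightarrow> P x"
  shows "P (ys ! k) \<longleftrightarrow> k < length (filter P ys)"
proof -
  let ?S = "{m. m < length ys \<and> P (ys ! m)}"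
  have "P (ys ! k) \<longleftrightarrow> {..k} \<subseteq> ?S"
    using k P[of "ys ! k"] sorted_nth_mono[OF sorted, of _ k] by auto
  also have "\<dots> \<longleftrightarrow> k < card ?S"
  proof
    assume "{..k} \<subseteq> ?S"
    then show "k < card ?S"
      using card_mono[of ?S "{..k}"] by auto
  next
    assume "k < card ?S"
    then have "\<not> ?S \<subseteq> {..<k}"
      using card_mono[of "{..<k}" ?S] by auto
    then obtain m where "m < length ys" "P (ys ! m)" "k \<le> m"
      by (force simp: subset_iff not_less)
    then show "{..k} \<subseteq> ?S"
      using P sorted_nth_mono[OF sorted] by (auto intro: order.trans)
  qed
  finally show ?thesis
    by (simp add: length_filter_conv_card)
qed

lemma order_stat_iff_card:
  assumes k: "1 \<le> k" "k \<le> n" and P: "\<And>x y. P y \<Longrightarrow> x \<le> y \<Longrightarrow> P x"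
  shows "P (order_stat n k x) \<longleftrightarrow> k \<le> card {j\<in>{1..n}. P (x j)}"
proof -
  have "length (filter P (sort (map x [1..<Suc n]))) = length (filter (P \<circ> x) [1..<Suc n])"
    by (simp only: filter_sort length_sort filter_map length_map)
  also have "\<dots> = card (set (filter (P \<circ> x) [1..<Suc n]))"
    by (rule distinct_card[symmetric]) (simp del: upt_Suc)
  also have "\<dots> = card {j\<in>{1..n}. P (x j)}"
    by (simp only: set_filter set_upt atLeastLessThanSuc_atLeastAtMost comp_def)
  finally have "length (filter P (sort (map x [1..<Suc n]))) = card {j\<in>{1..n}. P (x j)}" .
  moreover have "P (order_stat n k x) \<longleftrightarrow> k - 1 < length (filter P (sort (map x [1..<Suc n])))"
    unfolding order_stat_def using k
    by (intro sorted_nth_downward_closed_iff) (auto simp del: upt_Suc intro: P)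
  ultimately show ?thesis
    using k by linarith
qed

lemma order_stat_mem:
  assumes "1 \<le> k" "k \<le> n"
  shows "\<exists>i\<in>{1..n}. order_stat n k x = x i"
proof -
  have "order_stat n k x \<in> set (sort (map x [1..<Suc n]))"
    unfolding order_stat_def using assms by (intro nth_mem) (simp del: upt_Suc)
  then show ?thesis
    by (simp only: set_sort set_map set_upt image_iff atLeastLessThanSuc_atLeastAtMost)
qed

lemma order_stat_eq_iff_rank:
  assumes inj: "inj_on x {1..n}" and i: "i \<in> {1..n}" and k: "1 \<le> k" "k \<le> n"
  shows "order_stat n k x = x i \<longleftrightarrow> card {j\<in>{1..n}. x i < x j} = n - k"
proof -
  let ?L = "{j\<in>{1..n}. x j \<le> x i}"
  have "{j\<in>{1..n}. x j < x i} = ?L - {i}"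
    using inj i by (auto simp: inj_on_eq_iff less_le)
  then have card_lt: "card {j\<in>{1..n}. x j < x i} = card ?L - 1"
    using i by simp
  have "1 \<le> card ?L"
    using i by (auto simp: Suc_le_eq card_gt_0_iff)
  have "card ?L \<le> card {1..n}"
    by (intro card_mono) auto
  have "{j\<in>{1..n}. x i < x j} = {1..n} - ?L"
    by auto
  moreover have "card ({1..n} - ?L) = n - card ?L"
    by (subst card_Diff_subset) auto
  ultimately have card_gt: "card {j\<in>{1..n}. x i < x j} = n - card ?L"
    by simp
  have "order_stat n k x = x i \<longleftrightarrow> order_stat n k x \<le> x i \<and> \<not> order_stat n k x < x i"
    by auto
  also have "\<dots> \<longleftrightarrow> k \<le> card ?L \<and> \<not> k \<le> card {j\<in>{1..n}. x j < x i}"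
  proof -
    have "order_stat n k x \<le> x i \<longleftrightarrow> k \<le> card ?L"
      by (rule order_stat_iff_card[OF k]) auto
    moreover have "order_stat n k x < x i \<longleftrightarrow> k \<le> card {j\<in>{1..n}. x j < x i}"
      by (rule order_stat_iff_card[OF k]) auto
    ultimately show ?thesis
      by simp
  qed
  also have "\<dots> \<longleftrightarrow> card {j\<in>{1..n}. x i < x j} = n - k"
    unfolding card_lt card_gt using \<open>1 \<le> card ?L\<close> \<open>card ?L \<le> card {1..n}\<close> k by auto
  finally show ?thesis .
qed

lemma of_bool_order_stat_mem_eq_sum:
  assumes inj: "inj_on x {1..n}" and k: "1 \<le> k" "k \<le> n"
  shows "(of_bool (order_stat n k x \<in> A) :: 'a::comm_semiring_1)
       = (\<Sum>i\<in>{1..n}. \<Sum>J\<in>{J. J \<subseteq> {1..n} - {i} \<and> card J = n - k}. of_bool (x i \<in> A \<and> exceeds_exactly n i J (x i) x))"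
proof -
  obtain i0 where i0: "i0 \<in> {1..n}" "order_stat n k x = x i0"
    using order_stat_mem[OF k] by blast
  have "(\<Sum>J\<in>{J. J \<subseteq> {1..n} - {i} \<and> card J = n - k}. of_bool (x i \<in> A \<and> exceeds_exactly n i J (x i) x))
      = (of_bool (x i \<in> A \<and> i = i0) :: 'a)" if i: "i \<in> {1..n}" for i
  proof -
    let ?G = "{j\<in>{1..n}. x i < x j}"
    have "(\<Sum>J\<in>{J. J \<subseteq> {1..n} - {i} \<and> card J = n - k}. of_bool (x i \<in> A \<and> exceeds_exactly n i J (x i) x))
        = (\<Sum>J\<in>{J. J \<subseteq> {1..n} - {i} \<and> card J = n - k}. if J = ?G then of_bool (x i \<in> A) else (0 :: 'a))"
      by (intro sum.cong) (auto simp: exceeds_exactly_iff)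
    also have "\<dots> = of_bool (x i \<in> A \<and> card ?G = n - k)"
      by (subst sum.delta) (auto intro: finite_subset[of _ "Pow {1..n}"])
    also have "card ?G = n - k \<longleftrightarrow> i = i0"
      using order_stat_eq_iff_rank[OF inj i k] inj i i0 by (auto dest: inj_onD)
    finally show ?thesis .
  qed
  then have "(\<Sum>i\<in>{1..n}. \<Sum>J\<in>{J. J \<subseteq> {1..n} - {i} \<and> card J = n - k}. of_bool (x i \<in> A \<and> exceeds_exactly n i J (x i) x))
      = (\<Sum>i\<in>{1..n}. if i = i0 then of_bool (x i0 \<in> A) else (0 :: 'a))"
    by (intro sum.cong) auto
  also have "\<dots> = of_bool (order_stat n k x \<in> A)"
    using i0 by simp
  finally show ?thesis ..
qed

lemma borel_measurable_order_stat:
  assumes "\<And>i. i \<in> {1..n} \<Longrightarrow> X i \<in> borel_measurable M" "1 \<le> k" "k \<le> n"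
  shows "(\<lambda>\<omega>. order_stat n k (\<lambda>i. X i \<omega>)) \<in> borel_measurable M"
proof (subst borel_measurable_iff_le, intro allI)
  fix t
  have "order_stat n k (\<lambda>i. X i \<omega>) \<le> t \<longleftrightarrow> k \<le> card {j\<in>{1..n}. X j \<omega> \<le> t}" for \<omega>
    by (rule order_stat_iff_card[OF assms(2,3)]) auto
  then have "order_stat n k (\<lambda>i. X i \<omega>) \<le> t \<longleftrightarrow> real k \<le> (\<Sum>j\<in>{1..n}. of_bool (X j \<omega> \<le> t))" for \<omega>
    by (simp add: Int_def)
  moreover have "Measurable.pred M (\<lambda>\<omega>. real k \<le> (\<Sum>j\<in>{1..n}. of_bool (X j \<omega> \<le> t)))"
    using assms(1) by measurable
  ultimately show "{\<omega> \<in> space M. order_stat n k (\<lambda>i. X i \<omega>) \<le> t} \<in> sets M"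
    by (simp add: pred_def)
qed

section \<open>Jointly Gaussian fields\<close>

lemma covariance_sym: "covariance M Y Z = covariance M Z Y"
  by (simp add: covariance_def mult.commute)

locale jointly_gaussian_field = prob_space +
  fixes n :: nat and X :: "nat \<Rightarrow> 'a \<Rightarrow> real"
  assumes jointly_gaussian: "jointly_gaussian M {1..n} X"
begin

lemma X_measurable [measurable]: "i \<in> {1..n} \<Longrightarrow> X i \<in> borel_measurable M"
  using jointly_gaussian by (simp add: jointly_gaussian_def)

definition field_affine :: "('a \<Rightarrow> real) \<Rightarrow> bool" where
  "field_affine L \<longleftrightarrow> (\<exists>c d. \<forall>\<omega>. L \<omega> = (\<Sum>k\<in>{1..n}. c k * X k \<omega>) + d)"

lemma field_affine_gaussian:
  assumes "field_affine L"
  shows "gaussian_rv M L"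
proof -
  from assms obtain c d where "\<And>\<omega>. L \<omega> = (\<Sum>k\<in>{1..n}. c k * X k \<omega>) + d"
    by (auto simp: field_affine_def)
  then have "L = (\<lambda>\<omega>. (\<Sum>k\<in>{1..n}. c k * X k \<omega>) + d)"
    by auto
  then show ?thesis
    using jointly_gaussian by (simp add: jointly_gaussian_def gaussian_rv_add_const)
qed

lemma field_affine_const: "field_affine (\<lambda>_. d)"
  unfolding field_affine_def by (intro exI[of _ "\<lambda>_. 0"] exI[of _ d]) simp

lemma field_affine_X:
  assumes "i \<in> {1..n}"
  shows "field_affine (X i)"
proof -
  have "(\<Sum>k\<in>{1..n}. (if k = i then 1 else 0) * X k \<omega>) = (\<Sum>k\<in>{1..n}. if k = i then X k \<omega> else 0)" for \<omega>
    by (intro sum.cong) auto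
  then show ?thesis
    using assms unfolding field_affine_def by (intro exI[of _ "\<lambda>k. if k = i then 1 else 0"] exI[of _ 0]) simp
qed

lemma field_affine_add:
  assumes "field_affine A" "field_affine B"
  shows "field_affine (\<lambda>\<omega>. A \<omega> + B \<omega>)"
proof -
  obtain a d b e where "\<forall>\<omega>. A \<omega> = (\<Sum>k\<in>{1..n}. a k * X k \<omega>) + d" "\<forall>\<omega>. B \<omega> = (\<Sum>k\<in>{1..n}. b k * X k \<omega>) + e"
    using assms by (auto simp: field_affine_def)
  then show ?thesis
    unfolding field_affine_def
    by (intro exI[of _ "\<lambda>k. a k + b k"] exI[of _ "d + e"]) (simp add: distrib_right sum.distrib)
qed

lemma field_affine_scale:
  assumes "field_affine A"
  shows "field_affine (\<lambda>\<omega>. c * A \<omega>)"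
proof -
  obtain a d where "\<forall>\<omega>. A \<omega> = (\<Sum>k\<in>{1..n}. a k * X k \<omega>) + d"
    using assms by (auto simp: field_affine_def)
  then show ?thesis
    unfolding field_affine_def
    by (intro exI[of _ "\<lambda>k. c * a k"] exI[of _ "c * d"]) (simp add: distrib_left sum_distrib_left mult.assoc)
qed

lemma field_affine_sum: "finite S \<Longrightarrow> (\<And>j. j \<in> S \<Longrightarrow> field_affine (L j)) \<Longrightarrow> field_affine (\<lambda>\<omega>. \<Sum>j\<in>S. L j \<omega>)"
  by (induction S rule: finite_induct) (auto intro: field_affine_const field_affine_add)

lemma field_affine_measurable: "field_affine L \<Longrightarrow> L \<in> borel_measurable M"
  using field_affine_gaussian gaussian_rv_def by blast

lemma field_affine_square_integrable: "field_affine L \<Longrightarrow> integrable M (\<lambda>\<omega>. (L \<omega>)\<^sup>2)"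
  by (simp add: field_affine_gaussian gaussian_rv_square_integrable)

lemma field_affine_integrable: "field_affine L \<Longrightarrow> integrable M L"
  by (simp add: field_affine_measurable field_affine_square_integrable square_integrable_imp_integrable)

lemma field_affine_mult_integrable:
  assumes "field_affine A" "field_affine B"
  shows "integrable M (\<lambda>\<omega>. A \<omega> * B \<omega>)"
proof -
  have "(\<lambda>\<omega>. A \<omega> * B \<omega>) = (\<lambda>\<omega>. ((A \<omega> + B \<omega>)\<^sup>2 - (A \<omega>)\<^sup>2 - (B \<omega>)\<^sup>2) / 2)"
    by (simp add: fun_eq_iff power2_eq_square algebra_simps)
  then show ?thesis
    using assms field_affine_add[OF assms]
    by (auto intro!: Bochner_Integration.integrable_diff field_affine_square_integrable)
qed

lemma field_affine_diff_const: "field_affine A \<Longrightarrow> field_affine (\<lambda>\<omega>. A \<omega> - c)"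
  using field_affine_add[OF _ field_affine_const, of A "- c"] by simp

lemma covariance_scale_right: "covariance M A (\<lambda>\<omega>. c * B \<omega>) = c * covariance M A B"
proof -
  have "(\<lambda>\<omega>. (A \<omega> - expectation A) * (c * B \<omega> - expectation (\<lambda>\<omega>. c * B \<omega>)))
      = (\<lambda>\<omega>. c * ((A \<omega> - expectation A) * (B \<omega> - expectation B)))"
    by (simp add: fun_eq_iff algebra_simps)
  then show ?thesis
    unfolding covariance_def by simp
qed

lemma covariance_diff_const_right: "integrable M B \<Longrightarrow> covariance M A (\<lambda>\<omega>. B \<omega> - c) = covariance M A B"
  by (simp add: covariance_def prob_space)

lemma covariance_add_right:
  assumes "field_affine A" "field_affine B" "field_affine C"
  shows "covariance M A (\<lambda>\<omega>. B \<omega> + C \<omega>) = covariance M A B + covariance M A C"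
proof -
  have "expectation (\<lambda>\<omega>. B \<omega> + C \<omega>) = expectation B + expectation C"
    using assms by (simp add: field_affine_integrable)
  then have "(\<lambda>\<omega>. (A \<omega> - expectation A) * (B \<omega> + C \<omega> - expectation (\<lambda>\<omega>. B \<omega> + C \<omega>)))
      = (\<lambda>\<omega>. (A \<omega> - expectation A) * (B \<omega> - expectation B) + (A \<omega> - expectation A) * (C \<omega> - expectation C))"
    by (simp add: fun_eq_iff algebra_simps)
  moreover have "integrable M (\<lambda>\<omega>. (A \<omega> - expectation A) * (B \<omega> - expectation B))"
    "integrable M (\<lambda>\<omega>. (A \<omega> - expectation A) * (C \<omega> - expectation C))"
    using assms by (auto intro!: field_affine_mult_integrable field_affine_diff_const)
  ultimately show ?thesis
    unfolding covariance_def by simp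
qed

lemma covariance_sum_right:
  assumes "finite S" "field_affine A" "\<And>j. j \<in> S \<Longrightarrow> field_affine (B j)"
  shows "covariance M A (\<lambda>\<omega>. \<Sum>j\<in>S. B j \<omega>) = (\<Sum>j\<in>S. covariance M A (B j))"
  using assms
proof (induction S rule: finite_induct)
  case empty
  then show ?case
    by (simp add: covariance_def)
next
  case (insert j S)
  then show ?case
    by (simp add: covariance_add_right field_affine_sum)
qed

lemma variance_add:
  assumes "field_affine A" "field_affine B"
  shows "variance (\<lambda>\<omega>. A \<omega> + B \<omega>) = variance A + variance B + 2 * covariance M A B"
proof -
  have "(A \<omega> + B \<omega> - expectation (\<lambda>\<omega>. A \<omega> + B \<omega>))\<^sup>2
      = (A \<omega> - expectation A)\<^sup>2 + (B \<omega> - expectation B)\<^sup>2 + 2 * ((A \<omega> - expectation A) * (B \<omega> - expectation B))" for \<omega>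
    using assms by (simp add: field_affine_integrable power2_eq_square algebra_simps)
  moreover have "integrable M (\<lambda>\<omega>. (A \<omega> - expectation A)\<^sup>2)" "integrable M (\<lambda>\<omega>. (B \<omega> - expectation B)\<^sup>2)"
    "integrable M (\<lambda>\<omega>. (A \<omega> - expectation A) * (B \<omega> - expectation B))"
    using assms by (auto intro!: field_affine_mult_integrable field_affine_square_integrable field_affine_diff_const)
  ultimately show ?thesis
    by (simp add: covariance_def)
qed

lemma char_add_uncorrelated:
  assumes "field_affine A" "field_affine B" "covariance M A B = 0"
  shows "(CLINT \<omega>|M. iexp (A \<omega> + B \<omega>)) = (CLINT \<omega>|M. iexp (A \<omega>)) * (CLINT \<omega>|M. iexp (B \<omega>))"
proof -
  have "expectation (\<lambda>\<omega>. A \<omega> + B \<omega>) = expectation A + expectation B"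
    using assms by (simp add: field_affine_integrable)
  moreover have "variance (\<lambda>\<omega>. A \<omega> + B \<omega>) = variance A + variance B"
    using assms by (simp add: variance_add)
  moreover have "(CLINT \<omega>|M. iexp (A \<omega> + B \<omega>))
      = iexp (expectation (\<lambda>\<omega>. A \<omega> + B \<omega>)) * of_real (exp (- variance (\<lambda>\<omega>. A \<omega> + B \<omega>) / 2))"
    using assms by (intro char_gaussian_rv field_affine_gaussian field_affine_add)
  ultimately have "(CLINT \<omega>|M. iexp (A \<omega> + B \<omega>))
      = iexp (expectation A + expectation B) * of_real (exp (- (variance A + variance B) / 2))"
    by simp
  also have "\<dots> = (iexp (expectation A) * of_real (exp (- variance A / 2)))
      * (iexp (expectation B) * of_real (exp (- variance B / 2)))"
  proof -
    have "iexp (a + b) = iexp a * iexp b" "exp (- (u + v) / 2) = exp (- u / 2) * exp (- v / 2)" for a b u v :: real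
      by (simp_all add: distrib_left exp_add[symmetric] field_simps)
    then show ?thesis
      by (simp only: of_real_mult mult_ac)
  qed
  also have "\<dots> = (CLINT \<omega>|M. iexp (A \<omega>)) * (CLINT \<omega>|M. iexp (B \<omega>))"
    using assms by (simp add: char_gaussian_rv field_affine_gaussian)
  finally show ?thesis .
qed

lemma regr_resid_eq:
  "regr_resid M X j i = (\<lambda>\<omega>. (X j \<omega> - expectation (X j))
      + (- (covariance M (X j) (X i) / covariance M (X i) (X i))) * (X i \<omega> - expectation (X i)))"
  by (simp add: fun_eq_iff regr_resid_def)

lemma field_affine_regr_resid: "i \<in> {1..n} \<Longrightarrow> j \<in> {1..n} \<Longrightarrow> field_affine (regr_resid M X j i)"
  unfolding regr_resid_eq
  by (intro field_affine_add field_affine_scale field_affine_diff_const field_affine_X)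

lemma covariance_regr_resid:
  assumes "i \<in> {1..n}" "j \<in> {1..n}" "0 < variance (X i)"
  shows "covariance M (X i) (regr_resid M X j i) = 0"
proof -
  define b where "b = covariance M (X j) (X i) / covariance M (X i) (X i)"
  have "covariance M (X i) (regr_resid M X j i)
      = covariance M (X i) (\<lambda>\<omega>. X j \<omega> - expectation (X j)) + covariance M (X i) (\<lambda>\<omega>. - b * (X i \<omega> - expectation (X i)))"
    unfolding regr_resid_eq b_def using assms(1,2)
    by (intro covariance_add_right field_affine_scale field_affine_diff_const field_affine_X)
  also have "\<dots> = covariance M (X i) (X j) - b * covariance M (X i) (X i)"
    using assms(1,2) field_affine_integrable[OF field_affine_X]
    by (simp only: covariance_scale_right covariance_diff_const_right)
  finally show ?thesis
    unfolding b_def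
    using assms(3) by (simp add: variance_eq_covariance covariance_sym[of M "X i" "X j"])
qed

definition regr_coord :: "nat \<Rightarrow> nat \<Rightarrow> 'a \<Rightarrow> real" where
  "regr_coord i j = (if j = i then X i else regr_resid M X j i)"

lemma regr_coord_measurable [measurable]: "i \<in> {1..n} \<Longrightarrow> j \<in> {1..n} \<Longrightarrow> regr_coord i j \<in> borel_measurable M"
  by (simp add: regr_coord_def field_affine_measurable field_affine_regr_resid)

lemma char_regr_coords:
  assumes i: "i \<in> {1..n}" and var: "0 < variance (X i)"
  shows "(CLINT \<omega>|M. iexp (\<Sum>j\<in>{1..n}. t j * regr_coord i j \<omega>))
       = (CLINT p|M \<Otimes>\<^sub>M M. iexp (\<Sum>j\<in>{1..n}. t j * regr_coord i j (if j = i then fst p else snd p)))"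
proof -
  define T where "T \<omega> = (\<Sum>j\<in>{1..n} - {i}. t j * regr_resid M X j i \<omega>)" for \<omega>
  have split: "(\<Sum>j\<in>{1..n}. t j * regr_coord i j \<omega>) = t i * X i \<omega> + T \<omega>"
    "(\<Sum>j\<in>{1..n}. t j * regr_coord i j (if j = i then fst p else snd p)) = t i * X i (fst p) + T (snd p)"
    for \<omega> p
    using i by (simp_all add: sum.remove T_def regr_coord_def cong: sum.cong_simp)
  have T: "field_affine T"
    unfolding T_def using i by (intro field_affine_sum field_affine_scale field_affine_regr_resid) auto
  then have [measurable]: "T \<in> borel_measurable M"
    by (rule field_affine_measurable)
  have "covariance M (X i) T = (\<Sum>j\<in>{1..n} - {i}. t j * covariance M (X i) (regr_resid M X j i))"
    unfolding T_def using i
    by (subst covariance_sum_right)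
      (auto intro!: field_affine_scale field_affine_regr_resid field_affine_X simp: covariance_scale_right)
  also have "\<dots> = 0"
    using i var by (simp add: covariance_regr_resid)
  finally have "covariance M (\<lambda>\<omega>. t i * X i \<omega>) T = 0"
    by (simp add: covariance_sym[of M _ T] covariance_scale_right)
  then have "(CLINT \<omega>|M. iexp (t i * X i \<omega> + T \<omega>)) = (CLINT \<omega>|M. iexp (t i * X i \<omega>)) * (CLINT \<omega>|M. iexp (T \<omega>))"
    using i T by (intro char_add_uncorrelated field_affine_scale field_affine_X)
  also have "\<dots> = (CLINT p|M \<Otimes>\<^sub>M M. iexp (t i * X i (fst p)) * iexp (T (snd p)))"
    using i by (intro integral_pair_measure_mult[symmetric] prob_space_axioms) auto
  finally show ?thesis
    unfolding split by (simp add: distrib_left exp_add)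
qed

text \<open>On \<open>M \<Otimes>\<^sub>M M\<close> the coordinate \<open>X\<^sub>i\<close> is read from the first factor and the residuals from
  the second: the regression coordinates have the law of this independent coupling.\<close>

lemma distr_regr_coords:
  assumes "i \<in> {1..n}" "0 < variance (X i)"
  shows "distr M (PiM {1..n} (\<lambda>_. borel)) (\<lambda>\<omega>. \<lambda>j\<in>{1..n}. regr_coord i j \<omega>)
       = distr (M \<Otimes>\<^sub>M M) (PiM {1..n} (\<lambda>_. borel))
           (\<lambda>p. \<lambda>j\<in>{1..n}. regr_coord i j (if j = i then fst p else snd p))"
  using assms by (intro distr_PiM_eq_if_joint_char_eq prob_space_axioms prob_space_pair char_regr_coords) auto

definition regr_shift :: "nat \<Rightarrow> real \<Rightarrow> (nat \<Rightarrow> real) \<Rightarrow> nat \<Rightarrow> real" where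
  "regr_shift i z w j = expectation (X j)
     + covariance M (X j) (X i) / covariance M (X i) (X i) * (z - expectation (X i)) + w j"

lemma cond_prob_regr_eq:
  "cond_prob_regr M X n i J z = prob {\<omega> \<in> space M. exceeds_exactly n i J z (regr_shift i z (\<lambda>j. regr_resid M X j i \<omega>))}"
  by (simp add: cond_prob_regr_def regr_shift_def exceeds_exactly_def)

lemma regr_shift_regr_resid: "regr_shift i (X i \<omega>) (\<lambda>j. regr_resid M X j i \<omega>) = (\<lambda>j. X j \<omega>)"
  by (simp add: fun_eq_iff regr_shift_def regr_resid_def)

lemma pred_exceeds_exactly_regr_shift:
  assumes "i \<in> {1..n}" "J \<subseteq> {1..n}" and [measurable]: "f \<in> borel_measurable N"
  shows "Measurable.pred (N \<Otimes>\<^sub>M M)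
    (\<lambda>p. exceeds_exactly n i J (f (fst p)) (regr_shift i (f (fst p)) (\<lambda>j. regr_resid M X j i (snd p))))"
proof (rule measurable_exceeds_exactly[OF assms(2)])
  fix j assume "j \<in> {1..n}"
  then have [measurable]: "regr_resid M X j i \<in> borel_measurable M"
    using assms(1) by (simp add: field_affine_measurable field_affine_regr_resid)
  show "(\<lambda>p. regr_shift i (f (fst p)) (\<lambda>j. regr_resid M X j i (snd p)) j) \<in> borel_measurable (N \<Otimes>\<^sub>M M)"
    unfolding regr_shift_def by measurable
qed measurable

lemma borel_measurable_cond_prob_regr:
  assumes "i \<in> {1..n}" "J \<subseteq> {1..n}"
  shows "cond_prob_regr M X n i J \<in> borel_measurable borel"
proof -
  let ?Q = "{p \<in> space (borel \<Otimes>\<^sub>M M). exceeds_exactly n i J (fst p) (regr_shift i (fst p) (\<lambda>j. regr_resid M X j i (snd p)))}"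
  have "?Q \<in> sets (borel \<Otimes>\<^sub>M M)"
    using pred_exceeds_exactly_regr_shift[OF assms, of "\<lambda>z. z" borel] by (simp add: pred_def)
  then have "(\<lambda>z. emeasure M (Pair z -` ?Q)) \<in> borel_measurable borel"
    by (rule measurable_emeasure_Pair)
  moreover have "Pair z -` ?Q = {\<omega> \<in> space M. exceeds_exactly n i J z (regr_shift i z (\<lambda>j. regr_resid M X j i \<omega>))}" for z
    by (auto simp: space_pair_measure)
  ultimately have "(\<lambda>z. enn2real (emeasure M {\<omega> \<in> space M. exceeds_exactly n i J z (regr_shift i z (\<lambda>j. regr_resid M X j i \<omega>))}))
      \<in> borel_measurable borel"
    by (intro borel_measurable_enn2real) simp
  then show ?thesis
    by (simp add: cond_prob_regr_eq[abs_def] measure_def)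
qed

lemma emeasure_rank_event_decouple:
  assumes i: "i \<in> {1..n}" and J: "J \<subseteq> {1..n} - {i}" and var: "0 < variance (X i)"
    and [measurable]: "A \<in> sets borel"
  shows "emeasure M {\<omega> \<in> space M. X i \<omega> \<in> A \<and> exceeds_exactly n i J (X i \<omega>) (\<lambda>j. X j \<omega>)}
       = emeasure (M \<Otimes>\<^sub>M M) {p \<in> space (M \<Otimes>\<^sub>M M). X i (fst p) \<in> A \<and>
           exceeds_exactly n i J (X i (fst p)) (regr_shift i (X i (fst p)) (\<lambda>j. regr_resid M X j i (snd p)))}"
proof -
  define V where "V \<omega> = (\<lambda>j\<in>{1..n}. regr_coord i j \<omega>)" for \<omega>
  define V' where "V' p = (\<lambda>j\<in>{1..n}. regr_coord i j (if j = i then fst p else snd p))" for p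
  define P where "P v \<longleftrightarrow> v i \<in> A \<and> exceeds_exactly n i J (v i) (regr_shift i (v i) v)" for v
  have [measurable]: "(\<lambda>v. v j) \<in> borel_measurable (PiM {1..n} (\<lambda>_. borel :: real measure))" if "j \<in> {1..n}" for j
    using that by (rule measurable_component_singleton)
  have "Measurable.pred (PiM {1..n} (\<lambda>_. borel)) (\<lambda>v. exceeds_exactly n i J (v i) (regr_shift i (v i) v))"
    using i J unfolding regr_shift_def by (intro measurable_exceeds_exactly) auto
  then have S: "{v \<in> space (PiM {1..n} (\<lambda>_. borel)). P v} \<in> sets (PiM {1..n} (\<lambda>_. borel))"
    using i unfolding P_def by measurable
  have V [measurable]: "V \<in> measurable M (PiM {1..n} (\<lambda>_. borel))" "V' \<in> measurable (M \<Otimes>\<^sub>M M) (PiM {1..n} (\<lambda>_. borel))"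
    using i unfolding V_def V'_def by (auto intro!: measurable_restrict)
  have shift: "exceeds_exactly n i J z (regr_shift i z v) \<longleftrightarrow> exceeds_exactly n i J z (regr_shift i z w)"
    if "\<And>j. j \<in> {1..n} \<Longrightarrow> j \<noteq> i \<Longrightarrow> v j = w j" for z v w
    using J that by (intro exceeds_exactly_cong) (auto simp: regr_shift_def)
  have "P (V \<omega>) \<longleftrightarrow> X i \<omega> \<in> A \<and> exceeds_exactly n i J (X i \<omega>) (\<lambda>j. X j \<omega>)" for \<omega>
  proof -
    have "exceeds_exactly n i J (X i \<omega>) (regr_shift i (X i \<omega>) (V \<omega>))
        \<longleftrightarrow> exceeds_exactly n i J (X i \<omega>) (regr_shift i (X i \<omega>) (\<lambda>j. regr_resid M X j i \<omega>))"
      by (rule shift) (simp add: V_def regr_coord_def)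
    then show ?thesis
      using i by (simp add: P_def V_def regr_coord_def regr_shift_regr_resid)
  qed
  then have "{\<omega> \<in> space M. X i \<omega> \<in> A \<and> exceeds_exactly n i J (X i \<omega>) (\<lambda>j. X j \<omega>)}
      = V -` {v \<in> space (PiM {1..n} (\<lambda>_. borel)). P v} \<inter> space M"
    by (auto simp: V_def space_PiM)
  also have "emeasure M \<dots> = emeasure (distr M (PiM {1..n} (\<lambda>_. borel)) V) {v \<in> space (PiM {1..n} (\<lambda>_. borel)). P v}"
    by (rule emeasure_distr[OF V(1) S, symmetric])
  also have "distr M (PiM {1..n} (\<lambda>_. borel)) V = distr (M \<Otimes>\<^sub>M M) (PiM {1..n} (\<lambda>_. borel)) V'"
    unfolding V_def V'_def using i var by (rule distr_regr_coords)
  also have "emeasure \<dots> {v \<in> space (PiM {1..n} (\<lambda>_. borel)). P v}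
      = emeasure (M \<Otimes>\<^sub>M M) (V' -` {v \<in> space (PiM {1..n} (\<lambda>_. borel)). P v} \<inter> space (M \<Otimes>\<^sub>M M))"
    by (rule emeasure_distr[OF V(2) S])
  also have "V' -` {v \<in> space (PiM {1..n} (\<lambda>_. borel)). P v} \<inter> space (M \<Otimes>\<^sub>M M)
      = {p \<in> space (M \<Otimes>\<^sub>M M). X i (fst p) \<in> A \<and>
          exceeds_exactly n i J (X i (fst p)) (regr_shift i (X i (fst p)) (\<lambda>j. regr_resid M X j i (snd p)))}"
  proof -
    have "exceeds_exactly n i J z (regr_shift i z (V' p)) \<longleftrightarrow> exceeds_exactly n i J z (regr_shift i z (\<lambda>j. regr_resid M X j i (snd p)))" for z p
      by (rule shift) (simp add: V'_def regr_coord_def)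
    then have "P (V' p) \<longleftrightarrow> X i (fst p) \<in> A \<and>
        exceeds_exactly n i J (X i (fst p)) (regr_shift i (X i (fst p)) (\<lambda>j. regr_resid M X j i (snd p)))" for p
      using i by (simp add: P_def V'_def regr_coord_def)
    then show ?thesis
      by (auto simp: V'_def space_PiM)
  qed
  finally show ?thesis .
qed

lemma emeasure_rank_event:
  assumes i: "i \<in> {1..n}" and J: "J \<subseteq> {1..n} - {i}" and var: "0 < variance (X i)"
    and [measurable]: "A \<in> sets borel"
  shows "emeasure M {\<omega> \<in> space M. X i \<omega> \<in> A \<and> exceeds_exactly n i J (X i \<omega>) (\<lambda>j. X j \<omega>)}
       = (\<integral>\<^sup>+z. ennreal (normal_density (expectation (X i)) (sqrt (variance (X i))) z
              * cond_prob_regr M X n i J z) * indicator A z \<partial>lborel)"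
proof -
  let ?E = "\<lambda>z. {\<omega> \<in> space M. exceeds_exactly n i J z (regr_shift i z (\<lambda>j. regr_resid M X j i \<omega>))}"
  let ?Q = "{p \<in> space (M \<Otimes>\<^sub>M M). X i (fst p) \<in> A \<and>
      exceeds_exactly n i J (X i (fst p)) (regr_shift i (X i (fst p)) (\<lambda>j. regr_resid M X j i (snd p)))}"
  have [measurable]: "X i \<in> borel_measurable M" "cond_prob_regr M X n i J \<in> borel_measurable borel"
    using i J borel_measurable_cond_prob_regr[of i J] by auto
  have "Measurable.pred (M \<Otimes>\<^sub>M M) (\<lambda>p. exceeds_exactly n i J (X i (fst p))
      (regr_shift i (X i (fst p)) (\<lambda>j. regr_resid M X j i (snd p))))"
    using i J by (intro pred_exceeds_exactly_regr_shift) auto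
  then have Q: "?Q \<in> sets (M \<Otimes>\<^sub>M M)"
    by measurable
  have "emeasure M {\<omega> \<in> space M. X i \<omega> \<in> A \<and> exceeds_exactly n i J (X i \<omega>) (\<lambda>j. X j \<omega>)}
      = emeasure (M \<Otimes>\<^sub>M M) ?Q"
    using assms by (rule emeasure_rank_event_decouple)
  also have "\<dots> = (\<integral>\<^sup>+x. emeasure M (Pair x -` ?Q) \<partial>M)"
    using Q by (rule emeasure_pair_measure_alt)
  also have "\<dots> = (\<integral>\<^sup>+x. indicator A (X i x) * ennreal (cond_prob_regr M X n i J (X i x)) \<partial>M)"
  proof (rule nn_integral_cong)
    fix x assume "x \<in> space M"
    then have "Pair x -` ?Q = (if X i x \<in> A then ?E (X i x) else {})"
      by (auto simp: space_pair_measure)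
    then show "emeasure M (Pair x -` ?Q) = indicator A (X i x) * ennreal (cond_prob_regr M X n i J (X i x))"
      by (simp add: cond_prob_regr_eq emeasure_eq_measure)
  qed
  also have "\<dots> = (\<integral>\<^sup>+z. ennreal (normal_density (expectation (X i)) (sqrt (variance (X i))) z)
      * (indicator A z * ennreal (cond_prob_regr M X n i J z)) \<partial>lborel)"
    using i var
    by (intro distributed_nn_integral[symmetric] gaussian_rv_normal_distributed field_affine_gaussian field_affine_X)
      auto
  also have "\<dots> = (\<integral>\<^sup>+z. ennreal (normal_density (expectation (X i)) (sqrt (variance (X i))) z
      * cond_prob_regr M X n i J z) * indicator A z \<partial>lborel)"
    by (intro nn_integral_cong) (simp add: ennreal_mult cond_prob_regr_eq mult_ac)
  finally show ?thesis .
qed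

lemma AE_X_neq:
  assumes i: "i \<in> {1..n}" and j: "j \<in> {1..n}"
    and var: "0 < variance (X i)" "0 < variance (X j)" and cor: "correlation M (X i) (X j) < 1"
  shows "AE \<omega> in M. X i \<omega> \<noteq> X j \<omega>"
proof -
  let ?D = "\<lambda>\<omega>. X i \<omega> + (- 1) * X j \<omega>"
  \<comment> \<open>\<open>Cor(X\<^sub>i, X\<^sub>j) < 1\<close> makes \<open>Var(X\<^sub>i - X\<^sub>j)\<close> exceed \<open>(\<sigma>\<^sub>i - \<sigma>\<^sub>j)\<^sup>2\<close>.\<close>
  have D: "field_affine ?D"
    using i j by (intro field_affine_add field_affine_scale field_affine_X)
  have "covariance M (X i) (X j) < sqrt (variance (X i)) * sqrt (variance (X j))"
    using cor var by (simp add: correlation_def variance_eq_covariance real_sqrt_mult divide_less_eq)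
  moreover have "variance (\<lambda>\<omega>. - 1 * X j \<omega>) = variance (X j)"
    by (simp add: power2_commute)
  moreover have "variance ?D = variance (X i) + variance (\<lambda>\<omega>. - 1 * X j \<omega>) + 2 * covariance M (X i) (\<lambda>\<omega>. - 1 * X j \<omega>)"
    using i j by (intro variance_add field_affine_scale field_affine_X)
  moreover have "(sqrt (variance (X i)) - sqrt (variance (X j)))\<^sup>2
      = variance (X i) + variance (X j) - 2 * (sqrt (variance (X i)) * sqrt (variance (X j)))"
    using var by (simp add: power2_diff)
  ultimately have "(sqrt (variance (X i)) - sqrt (variance (X j)))\<^sup>2 < variance ?D"
    by (simp only: covariance_scale_right)
  then have "0 < variance ?D"
    by (meson le_less_trans zero_le_power2)
  then have "AE \<omega> in M. ?D \<omega> \<noteq> 0"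
    by (rule distributed_AE_neq[OF gaussian_rv_normal_distributed[OF field_affine_gaussian[OF D]]])
  then show ?thesis
    by (auto elim: eventually_mono)
qed

lemma AE_inj_on_X:
  assumes var: "\<And>i. i \<in> {1..n} \<Longrightarrow> 0 < variance (X i)"
    and cor: "\<And>i j. i \<in> {1..n} \<Longrightarrow> j \<in> {1..n} \<Longrightarrow> i \<noteq> j \<Longrightarrow> correlation M (X i) (X j) < 1"
  shows "AE \<omega> in M. inj_on (\<lambda>j. X j \<omega>) {1..n}"
proof -
  have "AE \<omega> in M. \<forall>i\<in>{1..n}. \<forall>j\<in>{1..n}. i \<noteq> j \<longrightarrow> X i \<omega> \<noteq> X j \<omega>"
    using var cor by (intro AE_finite_allI) (auto intro: AE_X_neq)
  then show ?thesis
    by (auto simp: inj_on_def elim: eventually_mono)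
qed

lemma emeasure_order_stat_mem:
  assumes k: "1 \<le> k" "k \<le> n" and inj: "AE \<omega> in M. inj_on (\<lambda>j. X j \<omega>) {1..n}"
    and [measurable]: "A \<in> sets borel"
  shows "emeasure M {\<omega> \<in> space M. order_stat n k (\<lambda>j. X j \<omega>) \<in> A}
       = (\<Sum>i\<in>{1..n}. \<Sum>J\<in>{J. J \<subseteq> {1..n} - {i} \<and> card J = n - k}.
            emeasure M {\<omega> \<in> space M. X i \<omega> \<in> A \<and> exceeds_exactly n i J (X i \<omega>) (\<lambda>j. X j \<omega>)})"
proof -
  let ?E = "\<lambda>i J. {\<omega> \<in> space M. X i \<omega> \<in> A \<and> exceeds_exactly n i J (X i \<omega>) (\<lambda>j. X j \<omega>)}"
  have [measurable]: "(\<lambda>\<omega>. order_stat n k (\<lambda>j. X j \<omega>)) \<in> borel_measurable M"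
    using k by (intro borel_measurable_order_stat) auto
  have E: "?E i J \<in> sets M" if "i \<in> {1..n}" "J \<subseteq> {1..n} - {i}" for i J
  proof -
    have "Measurable.pred M (\<lambda>\<omega>. exceeds_exactly n i J (X i \<omega>) (\<lambda>j. X j \<omega>))"
      using that by (intro measurable_exceeds_exactly) auto
    then show ?thesis
      using that by measurable
  qed
  have "emeasure M {\<omega> \<in> space M. order_stat n k (\<lambda>j. X j \<omega>) \<in> A}
      = (\<integral>\<^sup>+\<omega>. indicator {\<omega> \<in> space M. order_stat n k (\<lambda>j. X j \<omega>) \<in> A} \<omega> \<partial>M)"
    by (rule nn_integral_indicator[symmetric]) measurable
  also have "\<dots> = (\<integral>\<^sup>+\<omega>. of_bool (order_stat n k (\<lambda>j. X j \<omega>) \<in> A) \<partial>M)"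
    by (intro nn_integral_cong) (simp add: indicator_def)
  also have "\<dots> = (\<integral>\<^sup>+\<omega>. (\<Sum>i\<in>{1..n}. \<Sum>J\<in>{J. J \<subseteq> {1..n} - {i} \<and> card J = n - k}. indicator (?E i J) \<omega>) \<partial>M)"
  proof (rule nn_integral_cong_AE)
    show "AE \<omega> in M. of_bool (order_stat n k (\<lambda>j. X j \<omega>) \<in> A)
        = (\<Sum>i\<in>{1..n}. \<Sum>J\<in>{J. J \<subseteq> {1..n} - {i} \<and> card J = n - k}. indicator (?E i J) \<omega> :: ennreal)"
      using inj AE_space
    proof eventually_elim
      case (elim \<omega>)
      show ?case
        unfolding of_bool_order_stat_mem_eq_sum[OF elim(1) k]
        by (intro sum.cong refl) (simp add: indicator_def elim(2))
    qed
  qed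
  also have "\<dots> = (\<Sum>i\<in>{1..n}. \<Sum>J\<in>{J. J \<subseteq> {1..n} - {i} \<and> card J = n - k}. emeasure M (?E i J))"
    using E by (subst nn_integral_sum_sum) (auto intro!: sum.cong nn_integral_indicator)
  finally show ?thesis .
qed

lemma emeasure_order_stat_mem_eq_density:
  assumes k: "1 \<le> k" "k \<le> n"
    and var: "\<And>i. i \<in> {1..n} \<Longrightarrow> 0 < variance (X i)"
    and cor: "\<And>i j. i \<in> {1..n} \<Longrightarrow> j \<in> {1..n} \<Longrightarrow> i \<noteq> j \<Longrightarrow> correlation M (X i) (X j) < 1"
    and A [measurable]: "A \<in> sets borel"
  shows "emeasure M {\<omega> \<in> space M. order_stat n k (\<lambda>j. X j \<omega>) \<in> A}
    = (\<integral>\<^sup>+z. ennreal (\<Sum>i\<in>{1..n}. \<Sum>J\<in>{J. J \<subseteq> {1..n} - {i} \<and> card J = n - k}.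
      normal_density (expectation (X i)) (sqrt (variance (X i))) z * cond_prob_regr M X n i J z) * indicator A z \<partial>lborel)"
    (is "_ = (\<integral>\<^sup>+z. ennreal (\<Sum>i\<in>{1..n}. \<Sum>J\<in>?JJ i. ?g i J z) * _ \<partial>lborel)")
proof -
  have [measurable]: "cond_prob_regr M X n i J \<in> borel_measurable borel" if "i \<in> {1..n}" "J \<in> ?JJ i" for i J
    using that by (intro borel_measurable_cond_prob_regr) auto
  have "emeasure M {\<omega> \<in> space M. order_stat n k (\<lambda>j. X j \<omega>) \<in> A} = (\<Sum>i\<in>{1..n}. \<Sum>J\<in>?JJ i.
      emeasure M {\<omega> \<in> space M. X i \<omega> \<in> A \<and> exceeds_exactly n i J (X i \<omega>) (\<lambda>j. X j \<omega>)})"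
    by (rule emeasure_order_stat_mem[OF k AE_inj_on_X[OF var cor] A])
  also have "\<dots> = (\<Sum>i\<in>{1..n}. \<Sum>J\<in>?JJ i. \<integral>\<^sup>+z. ennreal (?g i J z) * indicator A z \<partial>lborel)"
    using var by (intro sum.cong refl emeasure_rank_event) auto
  also have "\<dots> = (\<integral>\<^sup>+z. (\<Sum>i\<in>{1..n}. \<Sum>J\<in>?JJ i. ennreal (?g i J z) * indicator A z) \<partial>lborel)"
    by (rule nn_integral_sum_sum[symmetric]) measurable
  also have "\<dots> = (\<integral>\<^sup>+z. (\<Sum>i\<in>{1..n}. \<Sum>J\<in>?JJ i. ennreal (?g i J z)) * indicator A z \<partial>lborel)"
    by (simp only: sum_distrib_right)
  also have "\<dots> = (\<integral>\<^sup>+z. ennreal (\<Sum>i\<in>{1..n}. \<Sum>J\<in>?JJ i. ?g i J z) * indicator A z \<partial>lborel)"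
    by (simp add: cond_prob_regr_eq sum_nonneg)
  finally show ?thesis .
qed

theorem order_stat_distributed:
  assumes k: "1 \<le> k" "k \<le> n"
    and var: "\<And>i. i \<in> {1..n} \<Longrightarrow> 0 < variance (X i)"
    and cor: "\<And>i j. i \<in> {1..n} \<Longrightarrow> j \<in> {1..n} \<Longrightarrow> i \<noteq> j \<Longrightarrow> correlation M (X i) (X j) < 1"
  shows "distributed M lborel (\<lambda>\<omega>. order_stat n k (\<lambda>j. X j \<omega>))
    (\<lambda>z. ennreal (\<Sum>i\<in>{1..n}. \<Sum>J\<in>{J. J \<subseteq> {1..n} - {i} \<and> card J = n - k}.
      normal_density (expectation (X i)) (sqrt (variance (X i))) z * cond_prob_regr M X n i J z))"
proof -
  have [measurable]: "cond_prob_regr M X n i J \<in> borel_measurable borel" if "i \<in> {1..n}" "J \<subseteq> {1..n} - {i}" for i J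
    using that by (intro borel_measurable_cond_prob_regr) auto
  have [measurable]: "(\<lambda>\<omega>. order_stat n k (\<lambda>j. X j \<omega>)) \<in> borel_measurable M"
    using k by (intro borel_measurable_order_stat) auto
  have "emeasure (distr M lborel (\<lambda>\<omega>. order_stat n k (\<lambda>j. X j \<omega>))) A
      = emeasure (density lborel (\<lambda>z. ennreal (\<Sum>i\<in>{1..n}. \<Sum>J\<in>{J. J \<subseteq> {1..n} - {i} \<and> card J = n - k}.
          normal_density (expectation (X i)) (sqrt (variance (X i))) z * cond_prob_regr M X n i J z))) A"
    if A: "A \<in> sets borel" for A
    using emeasure_order_stat_mem_eq_density[OF k var cor A] A
    by (simp add: emeasure_distr emeasure_density vimage_def Int_def conj_commute)
  then show ?thesis
    unfolding distributed_def by (auto intro!: measure_eqI borel_measurable_sum)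
qed

end

theorem proposition3:
  fixes M :: "'a measure" and X :: "nat \<Rightarrow> 'a \<Rightarrow> real"
    and \<mu> \<sigma> :: "nat \<Rightarrow> real" and n k :: nat
  assumes "prob_space M"
    and "jointly_gaussian M {1..n} X"
    and "\<forall>i\<in>{1..n}. integral\<^sup>L M (X i) = \<mu> i"
    and "\<forall>i\<in>{1..n}. \<sigma> i > 0 \<and> covariance M (X i) (X i) = (\<sigma> i)\<^sup>2"
    and "\<forall>i\<in>{1..n}. \<forall>j\<in>{1..n}. i \<noteq> j \<longrightarrow> correlation M (X i) (X j) < 1"
    and "1 \<le> k" and "k \<le> n"
  shows "distributed M lborel (\<lambda>\<omega>. order_stat n k (\<lambda>i. X i \<omega>))
           (\<lambda>z. ennreal (\<Sum>i\<in>{1..n}. \<Sum>J\<in>{J. J \<subseteq> {1..n} - {i} \<and> card J = n - k}.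
              1 / \<sigma> i * std_normal_density ((z - \<mu> i) / \<sigma> i) * cond_prob_regr M X n i J z))"
proof -
  interpret jointly_gaussian_field M n X
    using assms(1,2) by (simp add: jointly_gaussian_field_def jointly_gaussian_field_axioms_def)
  have moments: "expectation (X i) = \<mu> i" "sqrt (variance (X i)) = \<sigma> i" "0 < variance (X i)"
    if "i \<in> {1..n}" for i
  proof -
    have "0 < \<sigma> i" "variance (X i) = (\<sigma> i)\<^sup>2"
      using assms(4) that by (auto simp: variance_eq_covariance)
    then show "expectation (X i) = \<mu> i" "sqrt (variance (X i)) = \<sigma> i" "0 < variance (X i)"
      using assms(3) that by auto
  qed
  have density: "normal_density (expectation (X i)) (sqrt (variance (X i))) z
      = 1 / \<sigma> i * std_normal_density ((z - \<mu> i) / \<sigma> i)" if "i \<in> {1..n}" for i z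
    unfolding moments(2)[OF that] unfolding moments(1)[OF that]
    using assms(4) that by (intro normal_density_eq_std_normal_density) auto
  have "distributed M lborel (\<lambda>\<omega>. order_stat n k (\<lambda>i. X i \<omega>))
    (\<lambda>z. ennreal (\<Sum>i\<in>{1..n}. \<Sum>J\<in>{J. J \<subseteq> {1..n} - {i} \<and> card J = n - k}.
      normal_density (expectation (X i)) (sqrt (variance (X i))) z * cond_prob_regr M X n i J z))"
    using assms(5-7) moments(3) by (intro order_stat_distributed) auto
  also have "(\<lambda>z. ennreal (\<Sum>i\<in>{1..n}. \<Sum>J\<in>{J. J \<subseteq> {1..n} - {i} \<and> card J = n - k}.
      normal_density (expectation (X i)) (sqrt (variance (X i))) z * cond_prob_regr M X n i J z))
    = (\<lambda>z. ennreal (\<Sum>i\<in>{1..n}. \<Sum>J\<in>{J. J \<subseteq> {1..n} - {i} \<and> card J = n - k}.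
      1 / \<sigma> i * std_normal_density ((z - \<mu> i) / \<sigma> i) * cond_prob_regr M X n i J z))"
    by (intro ext arg_cong[where f=ennreal] sum.cong refl) (simp only: density)
  finally show ?thesis .
qed

end
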